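(* Let $X$ be a real reflexive Banach space, let $T:X\rightrightarrows X^{\ast}$ be maximally monotone, and let $h\in\mathcal{H}(T)$. Then $\breve{T}_h=L^{\mathcal{A}h}$, and $\breve{T}_h\in\mathbb{E}(T)$.
   Context: $X^{\ast}$ is the dual of $X$ with pairing $\langle\cdot,\cdot\rangle$; $\mathbb{R}_+=[0,\infty)$. The dual of $X\times X^{\ast}$ is identified with $X^{\ast}\times X$ via $\langle (x,x^{\ast}),(y^{\ast},y)\rangle=\langle x,y^{\ast}\rangle+\langle y,x^{\ast}\rangle$; for $g:X\times X^{\ast}\to\mathbb{R}\cup\{+\infty\}$, $g^{\ast}(y^{\ast},y)=\sup_{(x,x^{\ast})}\{\langle x,y^{\ast}\rangle+\langle y,x^{\ast}\rangle-g(x,x^{\ast})\}$, and $i(x,x^{\ast})=(x^{\ast},x)$. $\mathcal{H}(T)$ is the family of lower semicontinuous convex $h:X\times X^{\ast}\to\mathbb{R}\cup\{+\infty\}$ with $h(x,x^{\ast})\ge\langle x,x^{\ast}\rangle$ everywhere and equality whenever $x^{\ast}\in T(x)$. $\mathcal{A}h:=\tfrac12(h+h^{\ast}\circ i)$. For $\eta\ge0$ and $z=(x,x^{\ast})$ with $h(z)<\infty$, the $\eta$-subdifferential is $\partial_\eta h(z)=\{(y^{\ast},y)\in X^{\ast}\times X: h(w,w^{\ast})\ge h(z)+\langle w-x,y^{\ast}\rangle+\langle y,w^{\ast}-x^{\ast}\rangle-\eta\ \forall (w,w^{\ast})\}$, and $\partial_\eta h(z)=\emptyset$ if $h(z)=+\infty$.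 Define $\breve{T}_h:\mathbb{R}_+\times X\rightrightarrows X^{\ast}$ by $\breve{T}_h(\epsilon,x)=\{x^{\ast}:(x^{\ast},x)\in\partial_{2\epsilon}h(x,x^{\ast})\}$. For $g\in\mathcal{H}(T)$, $L^{g}(\epsilon,x):=\{x^{\ast}: g(x,x^{\ast})\le\langle x,x^{\ast}\rangle+\epsilon\}$. $\mathbb{E}(T)$ is the family of $E:\mathbb{R}_+\times X\rightrightarrows X^{\ast}$ such that: $(E_1)$ $T(x)\subset E(\epsilon,x)$ for all $\epsilon\ge0$, $x$; $(E_2)$ $E(\epsilon_1,x)\subset E(\epsilon_2,x)$ whenever $0\le\epsilon_1\le\epsilon_2$; $(E_3)$ if $x_1^{\ast}\in E(\epsilon_1,x_1)$, $x_2^{\ast}\in E(\epsilon_2,x_2)$, $\alpha\in[0,1]$, $\hat x=\alpha x_1+(1-\alpha)x_2$, $\hat x^{\ast}=\alpha x_1^{\ast}+(1-\alpha)x_2^{\ast}$, and $\epsilon=\alpha\epsilon_1+(1-\alpha)\epsilon_2+\alpha(1-\alpha)\langle x_1-x_2,x_1^{\ast}-x_2^{\ast}\rangle$, then $\epsilon\ge0$ and $\hat x^{\ast}\in E(\epsilon,\hat x)$. *)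

theory Defs
  imports "HOL-Analysis.Analysis"
begin

text \<open>The dual space X* is modelled as the bounded linear functionals;
 the pairing is blinfun_apply. Extended-real valued functions use ereal.\<close>

definition reflexive_space :: "'a::real_normed_vector itself \<Rightarrow> bool" where
  "reflexive_space (TYPE('a)) \<longleftrightarrow>
     (\<forall>\<phi> :: ('a \<Rightarrow>\<^sub>L real) \<Rightarrow>\<^sub>L real. \<exists>x::'a. \<forall>f. blinfun_apply \<phi> f = blinfun_apply f x)"

definition monotone_op :: "('a::real_normed_vector \<Rightarrow> ('a \<Rightarrow>\<^sub>L real) set) \<Rightarrow> bool" where
  "monotone_op T \<longleftrightarrow> (\<forall>x y xs ys. xs \<in> T x \<longrightarrow> ys \<in> T y \<longrightarrow> blinfun_apply (xs - ys) (x - y) \<ge> 0)"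

definition maximal_monotone :: "('a::real_normed_vector \<Rightarrow> ('a \<Rightarrow>\<^sub>L real) set) \<Rightarrow> bool" where
  "maximal_monotone T \<longleftrightarrow> monotone_op T \<and>
     (\<forall>S. monotone_op S \<longrightarrow> (\<forall>x. T x \<subseteq> S x) \<longrightarrow> S = T)"

definition lsc_fun :: "('b::topological_space \<Rightarrow> ereal) \<Rightarrow> bool" where
  "lsc_fun h \<longleftrightarrow> (\<forall>c::ereal. closed {z. h z \<le> c})"

definition convex_ereal :: "('b::real_vector \<Rightarrow> ereal) \<Rightarrow> bool" where
  "convex_ereal h \<longleftrightarrow> (\<forall>z w (a::real). 0 < a \<longrightarrow> a < 1 \<longrightarrow>
      h (a *\<^sub>R z + (1 - a) *\<^sub>R w) \<le> ereal a * h z + ereal (1 - a) * h w)"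

definition HH :: "('a::real_normed_vector \<Rightarrow> ('a \<Rightarrow>\<^sub>L real) set) \<Rightarrow> ('a \<times> ('a \<Rightarrow>\<^sub>L real) \<Rightarrow> ereal) set" where
  "HH T = {h. lsc_fun h \<and> convex_ereal h \<and>
      (\<forall>x xs. h (x, xs) \<ge> ereal (blinfun_apply xs x)) \<and>
      (\<forall>x xs. xs \<in> T x \<longrightarrow> h (x, xs) = ereal (blinfun_apply xs x))}"

text \<open>Fenchel conjugate on X \<times> X*, evaluated at (y*, y) in X* \<times> X.\<close>
definition fconj :: "('a::real_normed_vector \<times> ('a \<Rightarrow>\<^sub>L real) \<Rightarrow> ereal) \<Rightarrow> ('a \<Rightarrow>\<^sub>L real) \<times> 'a \<Rightarrow> ereal" where
  "fconj g = (\<lambda>(ys, y). SUP p\<in>UNIV. ereal (blinfun_apply ys (fst p) + blinfun_apply (snd p) y) - g p)"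

definition iswap :: "'a \<times> 'b \<Rightarrow> 'b \<times> 'a" where
  "iswap = (\<lambda>(x, xs). (xs, x))"

definition AA :: "('a::real_normed_vector \<times> ('a \<Rightarrow>\<^sub>L real) \<Rightarrow> ereal) \<Rightarrow> 'a \<times> ('a \<Rightarrow>\<^sub>L real) \<Rightarrow> ereal" where
  "AA h = (\<lambda>z. ereal (1/2) * (h z + fconj h (iswap z)))"

definition esubdiff :: "('a::real_normed_vector \<times> ('a \<Rightarrow>\<^sub>L real) \<Rightarrow> ereal) \<Rightarrow> real \<Rightarrow> 'a \<times> ('a \<Rightarrow>\<^sub>L real) \<Rightarrow> (('a \<Rightarrow>\<^sub>L real) \<times> 'a) set" where
  "esubdiff h \<eta> z = (if h z = \<infinity> then {} else
     {(ys, y). \<forall>w ws. h (w, ws) \<ge> h z + ereal (blinfun_apply ys (w - fst z) + blinfun_apply (ws - snd z) y - \<eta>)})"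

definition Tbreve :: "('a::real_normed_vector \<times> ('a \<Rightarrow>\<^sub>L real) \<Rightarrow> ereal) \<Rightarrow> real \<Rightarrow> 'a \<Rightarrow> ('a \<Rightarrow>\<^sub>L real) set" where
  "Tbreve h \<epsilon> x = {xs. (xs, x) \<in> esubdiff h (2 * \<epsilon>) (x, xs)}"

definition Lg :: "('a::real_normed_vector \<times> ('a \<Rightarrow>\<^sub>L real) \<Rightarrow> ereal) \<Rightarrow> real \<Rightarrow> 'a \<Rightarrow> ('a \<Rightarrow>\<^sub>L real) set" where
  "Lg g \<epsilon> x = {xs. g (x, xs) \<le> ereal (blinfun_apply xs x + \<epsilon>)}"

text \<open>The family E(T) of enlargements (maps defined on R_+ \<times> X; only \<epsilon> \<ge> 0 matters).\<close>
definition EE :: "('a::real_normed_vector \<Rightarrow> ('a \<Rightarrow>\<^sub>L real) set) \<Rightarrow> (real \<Rightarrow> 'a \<Rightarrow> ('a \<Rightarrow>\<^sub>L real) set) set" where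
  "EE T = {E.
     (\<forall>\<epsilon> x. 0 \<le> \<epsilon> \<longrightarrow> T x \<subseteq> E \<epsilon> x) \<and>
     (\<forall>\<epsilon>1 \<epsilon>2 x. 0 \<le> \<epsilon>1 \<longrightarrow> \<epsilon>1 \<le> \<epsilon>2 \<longrightarrow> E \<epsilon>1 x \<subseteq> E \<epsilon>2 x) \<and>
     (\<forall>\<epsilon>1 \<epsilon>2 x1 x2 x1s x2s (\<alpha>::real). 0 \<le> \<epsilon>1 \<longrightarrow> 0 \<le> \<epsilon>2 \<longrightarrow>
        x1s \<in> E \<epsilon>1 x1 \<longrightarrow> x2s \<in> E \<epsilon>2 x2 \<longrightarrow> 0 \<le> \<alpha> \<longrightarrow> \<alpha> \<le> 1 \<longrightarrow>
        (let xh = \<alpha> *\<^sub>R x1 + (1 - \<alpha>) *\<^sub>R x2;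
             xhs = \<alpha> *\<^sub>R x1s + (1 - \<alpha>) *\<^sub>R x2s;
             \<epsilon> = \<alpha> * \<epsilon>1 + (1 - \<alpha>) * \<epsilon>2 + \<alpha> * (1 - \<alpha>) * blinfun_apply (x1s - x2s) (x1 - x2)
         in 0 \<le> \<epsilon> \<and> xhs \<in> E \<epsilon> xh))}"

end

theory Submission
  imports Defs
begin

text \<open>By the Fenchel-Young characterization of \<eta>-subgradients, (xs, x) lies in the
  2\<epsilon>-subdifferential of h at (x, xs) iff h(x, xs) + h*(xs, x) \<le> 2 xs(x) + 2\<epsilon>, which says
  exactly that the average Ah is at most xs(x) + \<epsilon>. The function Ah is convex, dominates the
  pairing (Fenchel-Young again) and equals it on the graph of T. For every such function g the
  sublevel map L^g is an enlargement of T: condition E3 is the convexity of g combined with the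
  identity \<alpha> x1s(x1) + (1-\<alpha>) x2s(x2) = xhs(xh) + \<alpha>(1-\<alpha>) (x1s - x2s)(x1 - x2),
  and the new \<epsilon> is nonnegative because g dominates the pairing at (xh, xhs).\<close>

text \<open>Convexity of the real epigraph; unlike convex_ereal it involves no extended-real products,
  so it transfers directly to conjugates and to the average Ah.\<close>

definition epi_convex :: "('b::real_vector \<Rightarrow> ereal) \<Rightarrow> bool" where
  "epi_convex g \<longleftrightarrow> (\<forall>z w r s (a::real). g z \<le> ereal r \<longrightarrow> g w \<le> ereal s \<longrightarrow> 0 \<le> a \<longrightarrow> a \<le> 1 \<longrightarrow>
      g (a *\<^sub>R z + (1 - a) *\<^sub>R w) \<le> ereal (a * r + (1 - a) * s))"

lemma epi_convexD:
  "epi_convex g \<Longrightarrow> g z \<le> ereal r \<Longrightarrow> g w \<le> ereal s \<Longrightarrow> 0 \<le> a \<Longrightarrow> a \<le> 1 \<Longrightarrow>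
    g (a *\<^sub>R z + (1 - a) *\<^sub>R w) \<le> ereal (a * r + (1 - a) * s)"
  unfolding epi_convex_def by blast

lemma convex_ereal_imp_epi_convex:
  assumes "convex_ereal g"
  shows "epi_convex g"
  unfolding epi_convex_def
proof (intro allI impI)
  fix z w r s and a :: real
  assume r: "g z \<le> ereal r" and s: "g w \<le> ereal s" and a: "0 \<le> a" "a \<le> 1"
  show "g (a *\<^sub>R z + (1 - a) *\<^sub>R w) \<le> ereal (a * r + (1 - a) * s)"
  proof (cases "a = 0 \<or> a = 1")
    case True
    then show ?thesis using r s by auto
  next
    case False
    with a have "0 < a" "a < 1" by auto
    with assms have "g (a *\<^sub>R z + (1 - a) *\<^sub>R w) \<le> ereal a * g z + ereal (1 - a) * g w"
      unfolding convex_ereal_def by blast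
    also have "\<dots> \<le> ereal a * ereal r + ereal (1 - a) * ereal s"
      using a r s by (intro add_mono ereal_mult_left_mono) auto
    finally show ?thesis by simp
  qed
qed

lemma HH_pairing_le: "h \<in> HH T \<Longrightarrow> ereal (blinfun_apply xs x) \<le> h (x, xs)"
  by (simp add: HH_def)

lemma HH_epi_convex: "h \<in> HH T \<Longrightarrow> epi_convex h"
  by (simp add: HH_def convex_ereal_imp_epi_convex)

lemma HH_eq_pairing: "h \<in> HH T \<Longrightarrow> xs \<in> T x \<Longrightarrow> h (x, xs) = ereal (blinfun_apply xs x)"
  by (simp add: HH_def)

lemma ereal_half_le_iff: "ereal (1/2) * y \<le> ereal c \<longleftrightarrow> y \<le> ereal (2 * c)"
  by (cases y) auto

lemma fconj_upper: "ereal (blinfun_apply ys w + blinfun_apply ws y) - g (w, ws) \<le> fconj g (ys, y)"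
  unfolding fconj_def by (auto intro!: SUP_upper2[where i = "(w, ws)"])

lemma fconj_le_iff:
  "fconj g (ys, y) \<le> c \<longleftrightarrow> (\<forall>w ws. ereal (blinfun_apply ys w + blinfun_apply ws y) - g (w, ws) \<le> c)"
  unfolding fconj_def by (auto simp: SUP_le_iff)

lemma epi_convex_fconj: "epi_convex (fconj g)"
  unfolding epi_convex_def
proof (intro allI impI)
  fix u v :: "('a::real_normed_vector \<Rightarrow>\<^sub>L real) \<times> 'a" and r s a :: real
  assume r: "fconj g u \<le> ereal r" and s: "fconj g v \<le> ereal s" and a: "0 \<le> a" "a \<le> 1"
  obtain us uy vs vy where uv: "u = (us, uy)" "v = (vs, vy)" by fastforce
  have "ereal (blinfun_apply (a *\<^sub>R us + (1 - a) *\<^sub>R vs) w + blinfun_apply ws (a *\<^sub>R uy + (1 - a) *\<^sub>R vy))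
          - g (w, ws) \<le> ereal (a * r + (1 - a) * s)" for w ws
  proof (cases "g (w, ws)")
    case (real q)
    have "blinfun_apply us w + blinfun_apply ws uy - q \<le> r"
      using order_trans[OF fconj_upper[of us w ws uy g] r[unfolded uv]] real by simp
    moreover have "blinfun_apply vs w + blinfun_apply ws vy - q \<le> s"
      using order_trans[OF fconj_upper[of vs w ws vy g] s[unfolded uv]] real by simp
    ultimately have "a * (blinfun_apply us w + blinfun_apply ws uy - q)
        + (1 - a) * (blinfun_apply vs w + blinfun_apply ws vy - q) \<le> a * r + (1 - a) * s"
      using a by (intro add_mono mult_left_mono) auto
    then show ?thesis
      using real
      by (simp only: blinfun.add_left blinfun.add_right blinfun.scaleR_left blinfun.scaleR_right)
        (simp add: algebra_simps)
  next
    case MInf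
    then show ?thesis using r fconj_upper[of us w ws uy g] uv by simp
  qed simp
  then show "fconj g (a *\<^sub>R u + (1 - a) *\<^sub>R v) \<le> ereal (a * r + (1 - a) * s)"
    using uv by (simp add: fconj_le_iff)
qed

lemma esubdiff_iff_fenchel_young:
  assumes "h (x, xs) \<noteq> -\<infinity>"
  shows "(ys, y) \<in> esubdiff h \<eta> (x, xs) \<longleftrightarrow>
    h (x, xs) + fconj h (ys, y) \<le> ereal (blinfun_apply ys x + blinfun_apply xs y + \<eta>)"
proof (cases "h (x, xs)")
  case (real r)
  let ?c = "blinfun_apply ys x + blinfun_apply xs y + \<eta>"
  have pointwise: "ereal (r + (blinfun_apply ys (w - x) + blinfun_apply (ws - xs) y - \<eta>)) \<le> h (w, ws)
      \<longleftrightarrow> ereal (blinfun_apply ys w + blinfun_apply ws y) - h (w, ws) \<le> ereal (?c - r)" for w ws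
    by (cases "h (w, ws)") (auto simp: blinfun.diff_left blinfun.diff_right)
  have "ereal r + fconj h (ys, y) \<le> ereal ?c \<longleftrightarrow> fconj h (ys, y) \<le> ereal (?c - r)"
    by (cases "fconj h (ys, y)") auto
  then show ?thesis
    using real by (simp add: esubdiff_def fconj_le_iff pointwise)
qed (use assms in \<open>auto simp: esubdiff_def\<close>)

lemma Tbreve_eq_Lg_AA:
  assumes "h \<in> HH T"
  shows "Tbreve h \<epsilon> x = Lg (AA h) \<epsilon> x"
proof -
  have "h (x, xs) \<noteq> -\<infinity>" for xs
    using HH_pairing_le[OF assms, of xs x] by auto
  then show ?thesis
    by (auto simp: Tbreve_def Lg_def AA_def iswap_def esubdiff_iff_fenchel_young ereal_half_le_iff
        algebra_simps)
qed

lemma iswap_convex_comb: "iswap (a *\<^sub>R z + b *\<^sub>R w) = a *\<^sub>R iswap z + b *\<^sub>R iswap w"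
  by (cases z; cases w) (simp add: iswap_def)

lemma fenchel_young_iswap:
  assumes "h (x, xs) \<noteq> -\<infinity>"
  shows "ereal (2 * blinfun_apply xs x) \<le> h (x, xs) + fconj h (xs, x)"
proof (cases "h (x, xs)")
  case (real r)
  have "ereal (blinfun_apply xs x + blinfun_apply xs x) - ereal r \<le> fconj h (xs, x)"
    using fconj_upper[of xs x xs x h] real by simp
  then show ?thesis
    using real by (cases "fconj h (xs, x)") auto
qed (use assms in auto)

lemma pairing_le_AA:
  assumes "\<And>x xs. ereal (blinfun_apply xs x) \<le> h (x, xs)"
  shows "ereal (blinfun_apply xs x) \<le> AA h (x, xs)"
proof -
  have "h (x, xs) \<noteq> -\<infinity>" using assms[of xs x] by auto
  then have "ereal (2 * blinfun_apply xs x) \<le> h (x, xs) + fconj h (iswap (x, xs))"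
    using fenchel_young_iswap by (simp add: iswap_def)
  then show ?thesis
    by (cases "h (x, xs) + fconj h (iswap (x, xs))") (auto simp: AA_def)
qed

lemma AA_le_ereal:
  assumes "\<And>x xs. ereal (blinfun_apply xs x) \<le> h (x, xs)" and "AA h z \<le> ereal c"
  obtains r f where "h z = ereal r" "fconj h (iswap z) = ereal f" "r + f \<le> 2 * c"
proof -
  obtain x xs where z: "z = (x, xs)" by fastforce
  have sum: "h z + fconj h (iswap z) \<le> ereal (2 * c)"
    using assms(2) by (simp add: AA_def ereal_half_le_iff)
  have "h z \<noteq> -\<infinity>" using assms(1)[of xs x] z by auto
  moreover have "h z \<noteq> \<infinity>" using sum by auto
  ultimately obtain r where r: "h z = ereal r" by (cases "h z") auto
  have "ereal (2 * blinfun_apply xs x) \<le> ereal r + fconj h (iswap z)"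
    using fenchel_young_iswap[of h x xs] r z by (simp add: iswap_def)
  then have "fconj h (iswap z) \<noteq> -\<infinity>" by auto
  moreover have "fconj h (iswap z) \<noteq> \<infinity>" using sum r by auto
  ultimately obtain f where f: "fconj h (iswap z) = ereal f" by (cases "fconj h (iswap z)") auto
  show thesis using that[OF r f] sum r f by simp
qed

lemma epi_convex_AA:
  assumes "\<And>x xs. ereal (blinfun_apply xs x) \<le> h (x, xs)" and "epi_convex h"
  shows "epi_convex (AA h)"
  unfolding epi_convex_def
proof (intro allI impI)
  fix z w and c d a :: real
  assume "AA h z \<le> ereal c" "AA h w \<le> ereal d" and a: "0 \<le> a" "a \<le> 1"
  then obtain r1 f1 r2 f2 where
    r1: "h z = ereal r1" and f1: "fconj h (iswap z) = ereal f1" and c: "r1 + f1 \<le> 2 * c" and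
    r2: "h w = ereal r2" and f2: "fconj h (iswap w) = ereal f2" and d: "r2 + f2 \<le> 2 * d"
    using AA_le_ereal[OF assms(1)] by metis
  have "h (a *\<^sub>R z + (1 - a) *\<^sub>R w) \<le> ereal (a * r1 + (1 - a) * r2)"
    using epi_convexD[OF assms(2)] r1 r2 a by simp
  moreover have "fconj h (iswap (a *\<^sub>R z + (1 - a) *\<^sub>R w)) \<le> ereal (a * f1 + (1 - a) * f2)"
    unfolding iswap_convex_comb using epi_convexD[OF epi_convex_fconj, of h] f1 f2 a by simp
  ultimately have "h (a *\<^sub>R z + (1 - a) *\<^sub>R w) + fconj h (iswap (a *\<^sub>R z + (1 - a) *\<^sub>R w))
      \<le> ereal (a * r1 + (1 - a) * r2) + ereal (a * f1 + (1 - a) * f2)"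
    by (rule add_mono)
  also have "\<dots> = ereal (a * (r1 + f1) + (1 - a) * (r2 + f2))"
    by (simp add: algebra_simps)
  also have "\<dots> \<le> ereal (a * (2 * c) + (1 - a) * (2 * d))"
    using a c d by (simp add: add_mono mult_left_mono)
  finally show "AA h (a *\<^sub>R z + (1 - a) *\<^sub>R w) \<le> ereal (a * c + (1 - a) * d)"
    by (simp add: AA_def ereal_half_le_iff algebra_simps)
qed

lemma le_of_convex_comb_le_at_right_0:
  fixes A B s :: real
  assumes "\<And>t. 0 < t \<Longrightarrow> t < 1 \<Longrightarrow> (1 - t) * A + t * B \<le> s"
  shows "A \<le> s"
proof (rule tendsto_upperbound)
  show "((\<lambda>t. (1 - t) * A + t * B) \<longlongrightarrow> A) (at_right 0)"
    by (auto intro!: tendsto_eq_intros)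
  show "\<forall>\<^sub>F t in at_right 0. (1 - t) * A + t * B \<le> s"
    by (rule eventually_mono[OF eventually_at_right_real[of 0 1]]) (auto intro: assms)
qed simp

text \<open>A point where h touches the pairing minimizes h minus the pairing, so (xs, x), the gradient
  of the pairing there, is a subgradient of h. Quantitatively: compare h with the pairing along the
  segment to (w, ws), divide by the step t and let t tend to 0.\<close>
lemma fconj_iswap_le_pairing:
  assumes pairing_le: "\<And>x xs. ereal (blinfun_apply xs x) \<le> h (x, xs)" and "epi_convex h"
    and on_graph: "h (x, xs) \<le> ereal (blinfun_apply xs x)"
  shows "fconj h (xs, x) \<le> ereal (blinfun_apply xs x)"
  unfolding fconj_le_iff
proof (intro allI)
  fix w ws
  show "ereal (blinfun_apply xs w + blinfun_apply ws x) - h (w, ws) \<le> ereal (blinfun_apply xs x)"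
  proof (cases "h (w, ws)")
    case (real s)
    define A where "A = blinfun_apply xs w + blinfun_apply ws x - blinfun_apply xs x"
    have "(1 - t) * A + t * blinfun_apply ws w \<le> s" if t: "0 < t" "t < 1" for t
    proof -
      let ?p = "t *\<^sub>R (w, ws) + (1 - t) *\<^sub>R (x, xs)"
      have "ereal (blinfun_apply (snd ?p) (fst ?p)) \<le> h ?p"
        using pairing_le[of "snd ?p" "fst ?p"] by simp
      also have "\<dots> \<le> ereal (t * s + (1 - t) * blinfun_apply xs x)"
        using epi_convexD[OF assms(2) _ on_graph, of "(w, ws)" s t] real t by simp
      finally have "blinfun_apply (snd ?p) (fst ?p) \<le> t * s + (1 - t) * blinfun_apply xs x"
        by simp
      moreover have "blinfun_apply (snd ?p) (fst ?p)
          = t * ((1 - t) * A + t * blinfun_apply ws w) + (1 - t) * blinfun_apply xs x"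
        unfolding A_def
        by (simp only: fst_add snd_add fst_scaleR snd_scaleR fst_conv snd_conv blinfun.add_left
            blinfun.add_right blinfun.scaleR_left blinfun.scaleR_right) (simp add: algebra_simps)
      ultimately show ?thesis using t by simp
    qed
    then have "A \<le> s" by (rule le_of_convex_comb_le_at_right_0)
    then show ?thesis using real by (simp add: A_def)
  next
    case MInf
    then show ?thesis using pairing_le[of ws w] by simp
  qed simp
qed

lemma Lg_in_EE:
  assumes pairing_le: "\<And>x xs. ereal (blinfun_apply xs x) \<le> g (x, xs)" and "epi_convex g"
    and on_graph: "\<And>x xs. xs \<in> T x \<Longrightarrow> g (x, xs) \<le> ereal (blinfun_apply xs x)"
  shows "Lg g \<in> EE T"
  unfolding EE_def Let_def
proof (intro CollectI conjI allI impI)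
  fix \<epsilon> :: real and x
  assume "0 \<le> \<epsilon>"
  show "T x \<subseteq> Lg g \<epsilon> x"
  proof
    fix xs
    assume "xs \<in> T x"
    with \<open>0 \<le> \<epsilon>\<close> show "xs \<in> Lg g \<epsilon> x"
      using on_graph[of xs x] by (simp add: Lg_def order_trans)
  qed
next
  fix \<epsilon>1 \<epsilon>2 :: real and x
  assume "\<epsilon>1 \<le> \<epsilon>2"
  then show "Lg g \<epsilon>1 x \<subseteq> Lg g \<epsilon>2 x"
    by (auto simp: Lg_def elim!: order_trans)
next
  fix \<epsilon>1 \<epsilon>2 :: real and x1 x2 x1s x2s and \<alpha> :: real
  assume "x1s \<in> Lg g \<epsilon>1 x1" "x2s \<in> Lg g \<epsilon>2 x2" and \<alpha>: "0 \<le> \<alpha>" "\<alpha> \<le> 1"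
  define xh where "xh = \<alpha> *\<^sub>R x1 + (1 - \<alpha>) *\<^sub>R x2"
  define xhs where "xhs = \<alpha> *\<^sub>R x1s + (1 - \<alpha>) *\<^sub>R x2s"
  define \<epsilon> where "\<epsilon> = \<alpha> * \<epsilon>1 + (1 - \<alpha>) * \<epsilon>2 + \<alpha> * (1 - \<alpha>) * blinfun_apply (x1s - x2s) (x1 - x2)"
  have "\<alpha> * (blinfun_apply x1s x1 + \<epsilon>1) + (1 - \<alpha>) * (blinfun_apply x2s x2 + \<epsilon>2)
      = blinfun_apply xhs xh + \<epsilon>"
    unfolding xh_def xhs_def \<epsilon>_def
    by (simp only: blinfun.add_left blinfun.add_right blinfun.diff_left blinfun.diff_right
        blinfun.scaleR_left blinfun.scaleR_right) (simp add: algebra_simps)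
  moreover have "g (xh, xhs) \<le> ereal (\<alpha> * (blinfun_apply x1s x1 + \<epsilon>1) + (1 - \<alpha>) * (blinfun_apply x2s x2 + \<epsilon>2))"
    using epi_convexD[OF assms(2), of "(x1, x1s)" _ "(x2, x2s)" _ \<alpha>] \<open>x1s \<in> Lg g \<epsilon>1 x1\<close>
      \<open>x2s \<in> Lg g \<epsilon>2 x2\<close> \<alpha>
    by (simp add: Lg_def xh_def xhs_def)
  ultimately have le: "g (xh, xhs) \<le> ereal (blinfun_apply xhs xh + \<epsilon>)"
    by simp
  then show "xhs \<in> Lg g \<epsilon> xh" by (simp add: Lg_def)
  show "0 \<le> \<epsilon>" using order_trans[OF pairing_le le] by simp
qed

lemma HH_AA_le_pairing:
  assumes "h \<in> HH T" and "xs \<in> T x"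
  shows "AA h (x, xs) \<le> ereal (blinfun_apply xs x)"
proof -
  have h: "h (x, xs) = ereal (blinfun_apply xs x)"
    using HH_eq_pairing[OF assms] .
  moreover have "fconj h (xs, x) \<le> ereal (blinfun_apply xs x)"
    using fconj_iswap_le_pairing[OF HH_pairing_le[OF assms(1)] HH_epi_convex[OF assms(1)]] h
    by simp
  ultimately show ?thesis
    by (cases "fconj h (xs, x)") (simp_all add: AA_def iswap_def ereal_half_le_iff)
qed

theorem proposition3p1:
  fixes T :: "'a::banach \<Rightarrow> ('a \<Rightarrow>\<^sub>L real) set"
    and h :: "'a \<times> ('a \<Rightarrow>\<^sub>L real) \<Rightarrow> ereal"
  assumes "reflexive_space TYPE('a)"
    and "maximal_monotone T"
    and "h \<in> HH T"
  shows "(\<forall>\<epsilon>\<ge>0. \<forall>x. Tbreve h \<epsilon> x = Lg (AA h) \<epsilon> x) \<and> Tbreve h \<in> EE T"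
proof -
  have Tbreve: "Tbreve h = Lg (AA h)"
    using Tbreve_eq_Lg_AA[OF assms(3)] by blast
  have pairing_le: "\<And>x xs. ereal (blinfun_apply xs x) \<le> h (x, xs)"
    using HH_pairing_le[OF assms(3)] .
  have "Lg (AA h) \<in> EE T"
  proof (rule Lg_in_EE)
    show "\<And>x xs. ereal (blinfun_apply xs x) \<le> AA h (x, xs)"
      using pairing_le_AA[OF pairing_le] .
    show "epi_convex (AA h)"
      using epi_convex_AA[OF pairing_le HH_epi_convex[OF assms(3)]] .
    show "\<And>x xs. xs \<in> T x \<Longrightarrow> AA h (x, xs) \<le> ereal (blinfun_apply xs x)"
      using HH_AA_le_pairing[OF assms(3)] .
  qed
  with Tbreve show ?thesis by simp
qed

end
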